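(* Let $n\ge1$, $T\in M(n;\mathbb{C})$ non-singular with $\mathrm{Im}\,T$ positive definite, and $(r,A,p,q)\in\mathbb{N}\times M(n;\mathbb{Z})\times\mathbb{R}^n\times\mathbb{R}^n$. Then the pair $\mathscr{L}_{(r,A,p,q)}=(L_{(r,A,p)},\mathcal{L}_{(r,A,p,q)})$ is an object of the Fukaya category of $\check{T}^{2n}_{J=T}$ (i.e. $L_{(r,A,p)}$ is a Lagrangian submanifold of $(T^{2n},\omega)$ and the curvature of the connection of $\mathcal{L}_{(r,A,p,q)}$ equals $2\pi\mathbf{i}\,B|_{L_{(r,A,p)}}$) if and only if $AT=(AT)^t$.
   Context: $\check{T}^{2n}_{J=T}$ is the real torus $T^{2n}=\mathbb{R}^{2n}/2\pi\mathbb{Z}^{2n}$ with coordinates $(\check x,\check y)=(x^1,\dots,x^n,y^1,\dots,y^n)$ and complexified symplectic form $\tilde\omega=d\check x^t(-T^{-1})^td\check y$, where $d\check x=(dx^1,\dots,dx^n)^t$, $d\check y=(dy^1,\dots,dy^n)^t$; write $\tilde\omega=d\check x^t\omega\, d\check y+\mathbf{i}\,d\check x^tB\,d\check y$ with $\omega:=\mathrm{Im}(-T^{-1})^t$, $B:=\mathrm{Re}(-T^{-1})^t$ (also viewed as the $2$-forms $d\check x^t\omega d\check y$ and $d\check x^tBd\check y$). An object of the Fukaya category is a pair $(L,\mathcal{L})$ with $L$ a Lagrangian submanifold for $\omega$ and $\mathcal{L}\to L$ a complex line bundle with connection whose curvature is $2\pi\mathbf{i}B|_L$. Here $L_{(r,A,p)}$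 is the image under $\mathbb{R}^{2n}\to T^{2n}$ of $\{(\check x,\check y):\check y=\frac1rA\check x+\frac1rp\}$, and $\mathcal{L}_{(r,A,p,q)}\to L_{(r,A,p)}$ is the trivial line bundle with flat connection $d-\frac{\mathbf{i}}{2\pi}\frac1rq^td\check x$. *)

theory Defs
  imports "HOL-Analysis.Analysis"
begin

text \<open>Points of the universal cover R^{2n} of T^{2n} are pairs (x, y) of vectors in R^n.
  All forms involved are translation invariant, hence descend to the torus.\<close>

definition mat_Re :: "complex^'n^'m \<Rightarrow> real^'n^'m" where
  "mat_Re M = (\<chi> i j. Re (M $ i $ j))"

definition mat_Im :: "complex^'n^'m \<Rightarrow> real^'n^'m" where
  "mat_Im M = (\<chi> i j. Im (M $ i $ j))"

definition pos_def :: "real^'n^'n \<Rightarrow> bool" where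
  "pos_def M \<longleftrightarrow> (\<forall>x. x \<noteq> 0 \<longrightarrow> x \<bullet> (M *v x) > 0)"

definition omega_mat :: "complex^'n^'n \<Rightarrow> real^'n^'n" where
  "omega_mat T = mat_Im (transpose (- matrix_inv T))"

definition B_mat :: "complex^'n^'n \<Rightarrow> real^'n^'n" where
  "B_mat T = mat_Re (transpose (- matrix_inv T))"

text \<open>The constant 2-form  dx^t M dy = sum_{i,j} M_ij dx^i \<and> dy^j  on R^{2n},
  evaluated on two tangent vectors (u,v), (u',v').\<close>
definition twoform :: "real^'n^'n \<Rightarrow> ((real^'n) \<times> (real^'n)) \<Rightarrow> ((real^'n) \<times> (real^'n)) \<Rightarrow> real" where
  "twoform M w w' = fst w \<bullet> (M *v snd w') - fst w' \<bullet> (M *v snd w)"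

definition L_param :: "nat \<Rightarrow> int^'n^'n \<Rightarrow> real^'n \<Rightarrow> real^'n \<Rightarrow> (real^'n) \<times> (real^'n)" where
  "L_param r A p x = (x, (1 / real r) *\<^sub>R ((map_matrix real_of_int A) *v x + p))"

definition L_set :: "nat \<Rightarrow> int^'n^'n \<Rightarrow> real^'n \<Rightarrow> ((real^'n) \<times> (real^'n)) set" where
  "L_set r A p = {(x, y). y = (1 / real r) *\<^sub>R ((map_matrix real_of_int A) *v x + p)}"

definition pullback2 :: "real^'n^'n \<Rightarrow> (real^'n \<Rightarrow> (real^'n) \<times> (real^'n)) \<Rightarrow> real^'n \<Rightarrow> real^'n \<Rightarrow> real^'n \<Rightarrow> real" where
  "pullback2 M f x u v = twoform M (frechet_derivative f (at x) u) (frechet_derivative f (at x) v)"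

definition lagrangian :: "complex^'n^'n \<Rightarrow> nat \<Rightarrow> int^'n^'n \<Rightarrow> real^'n \<Rightarrow> bool" where
  "lagrangian T r A p \<longleftrightarrow>
     aff_dim (L_set r A p) = int CARD('n) \<and>
     (\<forall>x u v. pullback2 (omega_mat T) (L_param r A p) x u v = 0)"

text \<open>A connection d + alpha on a trivial line bundle over L, alpha = sum_i a_i(x) dx^i
  written in the coordinate x of L; its curvature is d alpha, evaluated on u, v at x.\<close>
definition oneform_pair :: "complex^'n \<Rightarrow> real^'n \<Rightarrow> complex" where
  "oneform_pair a v = (\<Sum>i\<in>UNIV. a $ i * complex_of_real (v $ i))"

definition curvature :: "(real^'n \<Rightarrow> complex^'n) \<Rightarrow> real^'n \<Rightarrow> real^'n \<Rightarrow> real^'n \<Rightarrow> complex" where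
  "curvature a x u v =
     frechet_derivative (\<lambda>y. oneform_pair (a y) v) (at x) u
   - frechet_derivative (\<lambda>y. oneform_pair (a y) u) (at x) v"

definition conn_form :: "nat \<Rightarrow> real^'n \<Rightarrow> real^'n \<Rightarrow> complex^'n" where
  "conn_form r q x = (\<chi> i. - (\<i> / (2 * complex_of_real pi)) * complex_of_real (q $ i / real r))"

definition fukaya_object :: "complex^'n^'n \<Rightarrow> nat \<Rightarrow> int^'n^'n \<Rightarrow> real^'n \<Rightarrow> real^'n \<Rightarrow> bool" where
  "fukaya_object T r A p q \<longleftrightarrow>
     lagrangian T r A p \<and>
     (\<forall>x u v. curvature (conn_form r q) x u v
               = 2 * complex_of_real pi * \<i> *
                 complex_of_real (pullback2 (B_mat T) (L_param r A p) x u v))"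

end

theory Submission
  imports Defs
begin

text \<open>The lift of \<open>L(r,A,p)\<close> is the graph of an affine map with linear part \<open>A/r\<close>, so the
  pull-back of \<open>dx\<^sup>t W dy\<close> to it is the antisymmetrisation of \<open>dx\<^sup>t (W A / r) dx\<close>, which vanishes
  iff \<open>W A\<close> is symmetric. The connection is flat, so the pair is an object iff both \<open>\<omega> A\<close> and
  \<open>B A\<close> are symmetric, i.e. iff \<open>(-T\<^sup>-\<^sup>1)\<^sup>t A\<close> is; conjugating by \<open>T\<close> turns this into the
  symmetry of \<open>A T\<close>.\<close>

lemma matrix_inv_right:
  fixes T :: "'a::semiring_1^'n^'m"
  assumes "invertible T"
  shows "T ** matrix_inv T = mat 1"
  using someI_ex[OF assms[unfolded invertible_def]] by (simp add: matrix_inv_def)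

lemma matrix_inv_left:
  fixes T :: "'a::semiring_1^'n^'m"
  assumes "invertible T"
  shows "matrix_inv T ** T = mat 1"
  using someI_ex[OF assms[unfolded invertible_def]] by (simp add: matrix_inv_def)

lemma transpose_uminus: "transpose (- M) = - transpose (M :: 'a::ab_group_add^'n^'m)"
  by (simp add: vec_eq_iff transpose_def)

lemma matrix_mul_uminus_left: "(- M) ** N = - (M ** (N :: 'a::ring_1^'k^'n))"
  by (simp add: vec_eq_iff matrix_matrix_mult_def sum_negf)

lemma symmetric_congruence_iff:
  fixes P M :: "'a::comm_semiring_1^'n^'n"
  assumes "invertible P"
  shows "transpose (transpose P ** M ** P) = transpose P ** M ** P \<longleftrightarrow> transpose M = M"
proof
  let ?Q = "matrix_inv P"
  have inv_t: "transpose ?Q ** transpose P = mat 1"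
    by (metis matrix_transpose_mul matrix_inv_right[OF assms] transpose_mat)
  have undo: "transpose ?Q ** (transpose P ** N ** P) ** ?Q = N" for N :: "'a^'n^'n"
  proof -
    have "transpose ?Q ** (transpose P ** N ** P) ** ?Q
        = (transpose ?Q ** transpose P) ** N ** (P ** ?Q)"
      by (simp add: matrix_mul_assoc)
    then show ?thesis by (simp add: inv_t matrix_inv_right[OF assms])
  qed
  assume "transpose (transpose P ** M ** P) = transpose P ** M ** P"
  then have "transpose P ** transpose M ** P = transpose P ** M ** P"
    by (simp add: matrix_transpose_mul matrix_mul_assoc)
  then show "transpose M = M"
    by (metis undo)
qed (simp add: matrix_transpose_mul matrix_mul_assoc)

lemma symmetric_transpose_inverse_mult_iff:
  fixes T X :: "'a::comm_semiring_1^'n^'n"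
  assumes "invertible T"
  shows "transpose (transpose (matrix_inv T) ** X) = transpose (matrix_inv T) ** X
     \<longleftrightarrow> X ** T = transpose (X ** T)"
proof -
  have "transpose T ** (transpose (matrix_inv T) ** X) ** T = X ** T"
    by (metis matrix_inv_left[OF assms] matrix_mul_assoc matrix_mul_lid matrix_transpose_mul
        transpose_mat)
  then show ?thesis
    using symmetric_congruence_iff[OF assms, of "transpose (matrix_inv T) ** X"] by auto
qed

lemma transpose_mat_Re: "transpose (mat_Re M) = mat_Re (transpose M)"
  by (simp add: vec_eq_iff transpose_def mat_Re_def)

lemma transpose_mat_Im: "transpose (mat_Im M) = mat_Im (transpose M)"
  by (simp add: vec_eq_iff transpose_def mat_Im_def)

lemma mat_Re_mult_of_int:
  "mat_Re M ** map_matrix real_of_int A = mat_Re (M ** map_matrix complex_of_int A)"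
  by (simp add: vec_eq_iff matrix_matrix_mult_def mat_Re_def map_matrix_def Re_sum)

lemma mat_Im_mult_of_int:
  "mat_Im M ** map_matrix real_of_int A = mat_Im (M ** map_matrix complex_of_int A)"
  by (simp add: vec_eq_iff matrix_matrix_mult_def mat_Im_def map_matrix_def Im_sum)

lemma symmetric_iff_Re_Im:
  "transpose M = M \<longleftrightarrow> transpose (mat_Re M) = mat_Re M \<and> transpose (mat_Im M) = mat_Im M"
  by (auto simp: transpose_mat_Re transpose_mat_Im vec_eq_iff mat_Re_def mat_Im_def
      complex_eq_iff transpose_def)

lemma symmetric_iff_bilinear_symmetric:
  fixes N :: "real^'n^'n"
  shows "(\<forall>u v. u \<bullet> (N *v v) = v \<bullet> (N *v u)) \<longleftrightarrow> transpose N = N"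
proof
  assume sym: "\<forall>u v. u \<bullet> (N *v v) = v \<bullet> (N *v u)"
  have "(N - transpose N) *v v = 0" for v
  proof -
    have "u \<bullet> ((N - transpose N) *v v) = 0" for u
      using sym by (simp add: matrix_vector_mult_diff_rdistrib inner_diff_right,
          metis dot_lmul_matrix inner_commute transpose_matrix_vector)
    from this[of "(N - transpose N) *v v"] show ?thesis by simp
  qed
  then show "transpose N = N"
    by (metis eq_iff_diff_eq_0 matrix_eq matrix_vector_mult_0)
qed (metis dot_lmul_matrix inner_commute transpose_matrix_vector)

lemma frechet_derivative_L_param:
  "frechet_derivative (L_param r A p) (at x)
     = (\<lambda>u. (u, (1 / real r) *\<^sub>R (map_matrix real_of_int A *v u)))"
proof -
  have "(L_param r A p has_derivative (\<lambda>u. (u, (1 / real r) *\<^sub>R (map_matrix real_of_int A *v u))))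
      (at x)"
    unfolding L_param_def
    by (auto intro!: derivative_eq_intros
        bounded_linear.has_derivative[OF matrix_vector_mul_bounded_linear]
        simp: matrix_vector_right_distrib)
  then show ?thesis by (rule frechet_derivative_at[symmetric])
qed

lemma pullback2_L_param:
  "pullback2 W (L_param r A p) x u v
     = (1 / real r) * (u \<bullet> ((W ** map_matrix real_of_int A) *v v)
                       - v \<bullet> ((W ** map_matrix real_of_int A) *v u))"
  by (simp add: pullback2_def frechet_derivative_L_param twoform_def matrix_vector_mul_assoc
      right_diff_distrib linear_cmul[OF matrix_vector_mul_linear])

lemma pullback2_L_param_eq_0_iff:
  assumes "r \<ge> 1"
  shows "(\<forall>x u v. pullback2 W (L_param r A p) x u v = 0)
     \<longleftrightarrow> transpose (W ** map_matrix real_of_int A) = W ** map_matrix real_of_int A"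
  using assms by (simp add: pullback2_L_param symmetric_iff_bilinear_symmetric[symmetric])

lemma aff_dim_L_set: "aff_dim (L_set r A (p :: real^'n)) = int CARD('n)"
proof -
  define g where "g = (\<lambda>x::real^'n. (x, (1 / real r) *\<^sub>R (map_matrix real_of_int A *v x)))"
  have "linear g"
    unfolding g_def
    by (intro bounded_linear.linear bounded_linear_Pair bounded_linear_ident
        bounded_linear_const_scaleR matrix_vector_mul_bounded_linear)
  moreover have "inj g"
    unfolding g_def by (auto intro: injI)
  moreover have "L_set r A p = (+) (0, (1 / real r) *\<^sub>R p) ` range g"
    unfolding L_set_def g_def by (auto simp: image_iff scaleR_add_right)
  ultimately show ?thesis by (simp add: aff_dim_translation_eq)
qed

lemma curvature_conn_form: "curvature (conn_form r q) x u v = 0"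
proof -
  have "frechet_derivative (\<lambda>y. oneform_pair (conn_form r q y) w) (at x) = (\<lambda>_. 0)" for w
    by (rule frechet_derivative_at[symmetric]) (simp add: conn_form_def)
  then show ?thesis by (simp add: curvature_def)
qed

theorem proposition4p2:
  fixes T :: "complex^'n^'n" and r :: nat and A :: "int^'n^'n" and p q :: "real^'n"
  assumes "invertible T"
    and "pos_def (mat_Im T)"
    and "r \<ge> 1"
  shows "fukaya_object T r A p q \<longleftrightarrow>
         (map_matrix complex_of_int A) ** T = transpose ((map_matrix complex_of_int A) ** T)"
proof -
  let ?Y = "transpose (matrix_inv T) ** map_matrix complex_of_int A"
  have "fukaya_object T r A p q \<longleftrightarrow>
      (\<forall>x u v. pullback2 (omega_mat T) (L_param r A p) x u v = 0) \<and>
      (\<forall>x u v. pullback2 (B_mat T) (L_param r A p) x u v = 0)"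
    unfolding fukaya_object_def lagrangian_def curvature_conn_form
    by (auto simp: aff_dim_L_set eq_commute[of 0])
  also have "\<dots> \<longleftrightarrow> transpose (- ?Y) = - ?Y"
    unfolding pullback2_L_param_eq_0_iff[OF assms(3)] symmetric_iff_Re_Im omega_mat_def B_mat_def
      mat_Re_mult_of_int mat_Im_mult_of_int transpose_uminus[of "matrix_inv T"]
      matrix_mul_uminus_left
    by blast
  also have "\<dots> \<longleftrightarrow> transpose ?Y = ?Y"
    by (simp add: transpose_uminus)
  also have "\<dots> \<longleftrightarrow> map_matrix complex_of_int A ** T = transpose (map_matrix complex_of_int A ** T)"
    by (rule symmetric_transpose_inverse_mult_iff[OF assms(1)])
  finally show ?thesis .
qed

end
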